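(* Consider the two-stage decision problem described in the context, with random uncertainty $u$ and probability level $\varepsilon\in(0,1)$. Let $$O := \min_{x \in \mathcal{X},\, \eta}\Big\{ f(x) + \eta \;:\; \Pr\Big[ \min_{y \in \mathcal{Y}(x, u)} h(y) \leq \eta \Big] \geq 1 - \varepsilon\Big\},$$ and, for a set $\mathcal{U}$, $$O_{\mathcal{U}} := \min_{x \in \mathcal{X}} \Big\{ f(x) + \max_{u \in \mathcal{U}} \min_{y \in \mathcal{Y}(x, u)} h(y) \Big\}.$$ Suppose $(x^*, \eta^* )$ is an optimal solution of the first problem (with optimal value $O$) and $x_{\mathcal{U}}^*$ is an optimal solution of the second problem (with optimal value $O_{\mathcal{U}}$). For any $x \in \mathcal{X}$ let $$O_x := f(x) + \min \Big\{ \eta ~\Big|~ \Pr \Big[ \min_{y \in \mathcal{Y}(x, u)} h(y) \leq \eta \Big] \geq 1 - \varepsilon \Big\}.$$ Then $O = O_{x^*} \leq O_{x_{\mathcal{U}}^*} \leq O_{\mathcal{U}}$ whenever $\mathcal{U}$ satisfies $\Pr[u \in \mathcal{U}] \geq 1 - \varepsilon$. Moreover, for $$\mathcal{U}^* := \Big\{ u ~\Big|~ \min_{y \in \mathcal{Y}(x^*, u)} h(y) \leq \eta^* \Big\}$$ one has $\Pr[u \in \mathcal{U}^*] \geq 1 - \varepsilon$ and $O = O_{\mathcal{U}^*}$.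
   Context: $\mathcal{X}$ is the feasible set of first-stage decisions $x$, and $f$ is a real-valued first-stage cost function on $\mathcal X$. $u$ is a random vector (the uncertainty) with probability measure $\Pr$. For each $x$ and each realization $u$, $\mathcal{Y}(x,u)$ is the feasible set of second-stage decisions $y$, and $h$ is the real-valued second-stage cost function; the minimum over an empty set is $+\infty$. The minima in the definitions of $O_x$ are assumed attained. *)

theory Defs
  imports "HOL-Probability.Probability"
begin

text \<open>Second-stage optimal value: min of h over Y(x,u); the infimum over the empty set
  in ereal is +infinity, matching the convention min over empty set = +infinity.\<close>
definition second_stage :: "('x \<Rightarrow> 'u \<Rightarrow> 'y set) \<Rightarrow> ('y \<Rightarrow> real) \<Rightarrow> 'x \<Rightarrow> 'u \<Rightarrow> ereal" where
  "second_stage Y h x u = (INF y\<in>Y x u. ereal (h y))"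

definition chance_ok :: "'u measure \<Rightarrow> ('x \<Rightarrow> 'u \<Rightarrow> 'y set) \<Rightarrow> ('y \<Rightarrow> real) \<Rightarrow> real \<Rightarrow> 'x \<Rightarrow> real \<Rightarrow> bool" where
  "chance_ok M Y h \<epsilon> x \<eta> \<longleftrightarrow> measure M {u \<in> space M. second_stage Y h x u \<le> ereal \<eta>} \<ge> 1 - \<epsilon>"

definition O_x :: "'u measure \<Rightarrow> ('x \<Rightarrow> real) \<Rightarrow> ('x \<Rightarrow> 'u \<Rightarrow> 'y set) \<Rightarrow> ('y \<Rightarrow> real) \<Rightarrow> real \<Rightarrow> 'x \<Rightarrow> ereal" where
  "O_x M f Y h \<epsilon> x = ereal (f x) + (INF \<eta>\<in>{\<eta>. chance_ok M Y h \<epsilon> x \<eta>}. ereal \<eta>)"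

definition O_U :: "('x \<Rightarrow> real) \<Rightarrow> 'x set \<Rightarrow> ('x \<Rightarrow> 'u \<Rightarrow> 'y set) \<Rightarrow> ('y \<Rightarrow> real) \<Rightarrow> 'u set \<Rightarrow> ereal" where
  "O_U f X Y h U = (INF x\<in>X. ereal (f x) + (SUP u\<in>U. second_stage Y h x u))"

end

theory Submission
  imports Defs
begin

text \<open>If a set \<open>U\<close> of probability at least \<open>1 - \<epsilon>\<close> is covered by the event
  \<open>second_stage Y h x u \<le> \<eta>\<close>, then \<open>\<eta>\<close> satisfies the chance constraint; so the worst case
  over \<open>U\<close> bounds \<open>O_x\<close> from above. Conversely, every optimal \<open>(x\<^sup>*, \<eta>\<^sup>*)\<close> gives the lower
  bound \<open>f x\<^sup>* + \<eta>\<^sup>* \<le> O_x x\<close> for all \<open>x\<close>, and the event defining \<open>U\<^sup>*\<close> has worst case exactly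
  \<open>\<eta>\<^sup>*\<close>.\<close>

lemma chance_ok_if_SUP_le:
  assumes "prob_space M" "\<epsilon> < 1"
    and meas: "{u \<in> space M. second_stage Y h x u \<le> ereal \<eta>} \<in> sets M"
    and prob_U: "measure M U \<ge> 1 - \<epsilon>"
    and SUP_le: "(SUP u\<in>U. second_stage Y h x u) \<le> ereal \<eta>"
  shows "chance_ok M Y h \<epsilon> x \<eta>"
proof -
  interpret prob_space M by fact
  \<comment> \<open>\<open>measure\<close> is \<open>0\<close> outside \<open>sets M\<close>, and \<open>1 - \<epsilon> > 0\<close>.\<close>
  have U: "U \<in> sets M"
    using prob_U \<open>\<epsilon> < 1\<close> measure_notin_sets[of U M] by force
  have "U \<subseteq> {u \<in> space M. second_stage Y h x u \<le> ereal \<eta>}"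
    using sets.sets_into_space[OF U] SUP_le by (auto intro: order_trans[OF SUP_upper])
  then have "measure M U \<le> measure M {u \<in> space M. second_stage Y h x u \<le> ereal \<eta>}"
    using finite_measure_mono meas by blast
  with prob_U show ?thesis
    unfolding chance_ok_def by linarith
qed

lemma O_x_le:
  assumes "chance_ok M Y h \<epsilon> x \<eta>"
  shows "O_x M f Y h \<epsilon> x \<le> ereal (f x + \<eta>)"
proof -
  have "(INF \<eta>\<in>{\<eta>. chance_ok M Y h \<epsilon> x \<eta>}. ereal \<eta>) \<le> ereal \<eta>"
    using assms by (auto intro: INF_lower)
  then show ?thesis
    unfolding O_x_def by (metis add_left_mono plus_ereal.simps(1))
qed

lemma ereal_le_O_x:
  assumes "\<forall>\<eta>. chance_ok M Y h \<epsilon> x \<eta> \<longrightarrow> c \<le> f x + \<eta>"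
  shows "ereal c \<le> O_x M f Y h \<epsilon> x"
proof -
  have "ereal (c - f x) \<le> (INF \<eta>\<in>{\<eta>. chance_ok M Y h \<epsilon> x \<eta>}. ereal \<eta>)"
    using assms by (auto intro!: INF_greatest)
  then have "ereal (f x) + ereal (c - f x) \<le> O_x M f Y h \<epsilon> x"
    unfolding O_x_def by (rule add_left_mono)
  then show ?thesis by simp
qed

lemma O_x_le_worst_case:
  assumes "prob_space M" "\<epsilon> < 1"
    and meas: "\<forall>\<eta>. {u \<in> space M. second_stage Y h x u \<le> ereal \<eta>} \<in> sets M"
    and prob_U: "measure M U \<ge> 1 - \<epsilon>"
  shows "O_x M f Y h \<epsilon> x \<le> ereal (f x) + (SUP u\<in>U. second_stage Y h x u)"
proof -
  have "(INF \<eta>\<in>{\<eta>. chance_ok M Y h \<epsilon> x \<eta>}. ereal \<eta>) \<le> (SUP u\<in>U. second_stage Y h x u)"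
  proof (rule ereal_le_real)
    fix z
    assume "(SUP u\<in>U. second_stage Y h x u) \<le> ereal z"
    then have "chance_ok M Y h \<epsilon> x z"
      by (rule chance_ok_if_SUP_le[OF assms(1,2) meas[rule_format] prob_U])
    then show "(INF \<eta>\<in>{\<eta>. chance_ok M Y h \<epsilon> x \<eta>}. ereal \<eta>) \<le> ereal z"
      by (auto intro: INF_lower)
  qed
  then show ?thesis
    unfolding O_x_def by (rule add_left_mono)
qed

lemma INF_O_x_le_O_U:
  assumes "prob_space M" "\<epsilon> < 1"
    and meas: "\<forall>x\<in>X. \<forall>\<eta>. {u \<in> space M. second_stage Y h x u \<le> ereal \<eta>} \<in> sets M"
    and prob_U: "measure M U \<ge> 1 - \<epsilon>"
  shows "(INF x\<in>X. O_x M f Y h \<epsilon> x) \<le> O_U f X Y h U"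
  unfolding O_U_def
proof (rule INF_mono)
  fix x
  assume "x \<in> X"
  then show "\<exists>x'\<in>X. O_x M f Y h \<epsilon> x' \<le> ereal (f x) + (SUP u\<in>U. second_stage Y h x u)"
    using O_x_le_worst_case[OF assms(1,2) bspec[OF meas] prob_U] by blast
qed

lemma O_U_eq_at_minimizer:
  assumes "xU \<in> X"
    and "\<forall>x\<in>X. ereal (f xU) + (SUP u\<in>U. second_stage Y h xU u)
                \<le> ereal (f x) + (SUP u\<in>U. second_stage Y h x u)"
  shows "O_U f X Y h U = ereal (f xU) + (SUP u\<in>U. second_stage Y h xU u)"
  unfolding O_U_def
  by (rule antisym) (use assms in \<open>auto intro: INF_lower INF_greatest\<close>)

lemma O_U_level_set_le:
  assumes "x \<in> X"
  shows "O_U f X Y h {u \<in> space M. second_stage Y h x u \<le> ereal \<eta>} \<le> ereal (f x + \<eta>)"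
proof -
  have "(SUP u\<in>{u \<in> space M. second_stage Y h x u \<le> ereal \<eta>}. second_stage Y h x u) \<le> ereal \<eta>"
    by (auto intro: SUP_least)
  then have "O_U f X Y h {u \<in> space M. second_stage Y h x u \<le> ereal \<eta>} \<le> ereal (f x) + ereal \<eta>"
    unfolding O_U_def using assms by (meson INF_lower2 add_left_mono)
  then show ?thesis by simp
qed

theorem lemma1:
  fixes M :: "'u measure" and X :: "'x set" and f :: "'x \<Rightarrow> real"
    and Y :: "'x \<Rightarrow> 'u \<Rightarrow> 'y set" and h :: "'y \<Rightarrow> real" and \<epsilon> :: real
    and xs :: 'x and \<eta>s :: real
  assumes "prob_space M"
    and "0 < \<epsilon>" and "\<epsilon> < 1"
    and attain_Y: "\<forall>x\<in>X. \<forall>u\<in>space M. Y x u \<noteq> {} \<longrightarrow> (\<exists>y\<in>Y x u. \<forall>y'\<in>Y x u. h y \<le> h y')"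
    and meas: "\<forall>x\<in>X. \<forall>\<eta>. {u \<in> space M. second_stage Y h x u \<le> ereal \<eta>} \<in> sets M"
    and attain_Ox: "\<forall>x\<in>X. {\<eta>. chance_ok M Y h \<epsilon> x \<eta>} \<noteq> {} \<longrightarrow>
          (\<exists>\<eta>. chance_ok M Y h \<epsilon> x \<eta> \<and> (\<forall>\<eta>'. chance_ok M Y h \<epsilon> x \<eta>' \<longrightarrow> \<eta> \<le> \<eta>'))"
    and xs_in: "xs \<in> X" and xs_feas: "chance_ok M Y h \<epsilon> xs \<eta>s"
    and xs_opt: "\<forall>x\<in>X. \<forall>\<eta>. chance_ok M Y h \<epsilon> x \<eta> \<longrightarrow> f xs + \<eta>s \<le> f x + \<eta>"
  shows "ereal (f xs + \<eta>s) = O_x M f Y h \<epsilon> xs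
    \<and> (\<forall>U xU. measure M U \<ge> 1 - \<epsilon> \<and> xU \<in> X
          \<and> (\<forall>x\<in>X. ereal (f xU) + (SUP u\<in>U. second_stage Y h xU u)
                      \<le> ereal (f x) + (SUP u\<in>U. second_stage Y h x u))
        \<longrightarrow> O_x M f Y h \<epsilon> xs \<le> O_x M f Y h \<epsilon> xU \<and> O_x M f Y h \<epsilon> xU \<le> O_U f X Y h U)
    \<and> measure M {u \<in> space M. second_stage Y h xs u \<le> ereal \<eta>s} \<ge> 1 - \<epsilon>
    \<and> ereal (f xs + \<eta>s) = O_U f X Y h {u \<in> space M. second_stage Y h xs u \<le> ereal \<eta>s}"
proof -
  have lower: "ereal (f xs + \<eta>s) \<le> O_x M f Y h \<epsilon> x" if "x \<in> X" for x
    using xs_opt that by (intro ereal_le_O_x) blast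
  have O_x_xs: "ereal (f xs + \<eta>s) = O_x M f Y h \<epsilon> xs"
    using O_x_le[OF xs_feas] lower[OF xs_in] by (rule antisym[rotated])
  have robust: "O_x M f Y h \<epsilon> xs \<le> O_x M f Y h \<epsilon> xU \<and> O_x M f Y h \<epsilon> xU \<le> O_U f X Y h U"
    if "measure M U \<ge> 1 - \<epsilon>" "xU \<in> X"
      and "\<forall>x\<in>X. ereal (f xU) + (SUP u\<in>U. second_stage Y h xU u)
                  \<le> ereal (f x) + (SUP u\<in>U. second_stage Y h x u)" for U xU
  proof
    show "O_x M f Y h \<epsilon> xs \<le> O_x M f Y h \<epsilon> xU"
      using O_x_xs lower \<open>xU \<in> X\<close> by simp
    show "O_x M f Y h \<epsilon> xU \<le> O_U f X Y h U"
      using O_U_eq_at_minimizer[OF that(2,3)]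
        O_x_le_worst_case[OF \<open>prob_space M\<close> \<open>\<epsilon> < 1\<close> bspec[OF meas that(2)] that(1)] by simp
  qed
  have prob_level_set: "measure M {u \<in> space M. second_stage Y h xs u \<le> ereal \<eta>s} \<ge> 1 - \<epsilon>"
    using xs_feas unfolding chance_ok_def .
  have "ereal (f xs + \<eta>s) \<le> (INF x\<in>X. O_x M f Y h \<epsilon> x)"
    using lower by (rule INF_greatest)
  also have "\<dots> \<le> O_U f X Y h {u \<in> space M. second_stage Y h xs u \<le> ereal \<eta>s}"
    using INF_O_x_le_O_U[OF \<open>prob_space M\<close> \<open>\<epsilon> < 1\<close> meas prob_level_set] .
  finally have "ereal (f xs + \<eta>s) = O_U f X Y h {u \<in> space M. second_stage Y h xs u \<le> ereal \<eta>s}"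
    using O_U_level_set_le[OF xs_in] by (rule antisym)
  with O_x_xs robust prob_level_set show ?thesis
    by blast
qed

end
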